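(* Let $p,\sigma,\bar\theta>0$, let $E:[0,\infty)\to\mathbb R$ be continuous with $|E(t)|\le Ce^{-ct}$ for some $C,c>0$, and let $y:[0,\infty)\to[0,\infty)$ be a non-negative $C^1$ solution of $$\dot y=p\sigma\,y(\bar\theta-y)+E(t).$$ Then either $y(t)\to0$ as $t\to\infty$, or there exist $C',\delta>0$ such that $|y(t)-\bar\theta|\le C'e^{-\delta t}$ for all $t\ge0$. *)

theory Defs
  imports "HOL-Analysis.Analysis"
begin

end

theory Submission
  imports Defs "HOL-Real_Asymp.Real_Asymp"
begin

text \<open>Once y exceeds some level \<eta> \<in> (0, \<theta>) at a time when the forcing E is already smaller
than the logistic drift k\<eta>(\<theta>-\<eta>) at that level (k = p\<sigma>), it can never drop below \<eta> again.
Writing z = y - \<theta>, the equation reads z' = -k y z + E with damping k y \<ge> k\<eta>, so both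
\<plusminus>z stay below A e^{-\<delta>t} for \<delta> < min(c, k\<eta>) and A large. All three comparisons are
instances of one barrier argument: a function that is negative at time a and has negative
derivative wherever it vanishes stays negative.\<close>

lemma neg_on_halfline_if_deriv_neg_at_zeros:
  fixes h h' :: "real \<Rightarrow> real"
  assumes neg: "h a < 0"
    and deriv: "\<And>t. t \<ge> a \<Longrightarrow> (h has_real_derivative h' t) (at t within {a..})"
    and deriv_neg: "\<And>t. t \<ge> a \<Longrightarrow> h t = 0 \<Longrightarrow> h' t < 0"
    and "t \<ge> a"
  shows "h t < 0"
proof (rule ccontr)
  assume "\<not> h t < 0"
  have cont: "continuous_on {a..t} h"
    by (rule DERIV_continuous_on, rule has_field_derivative_subset[OF deriv]) auto
  define Z where "Z = {s \<in> {a..t}. h s = 0}"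
  have "\<exists>s\<ge>a. s \<le> t \<and> h s = 0"
    by (rule IVT') (use neg \<open>\<not> h t < 0\<close> \<open>t \<ge> a\<close> cont in auto)
  then have "Z \<noteq> {}" unfolding Z_def by auto
  moreover have "closed Z" unfolding Z_def
    by (rule continuous_closed_preimage_constant[OF cont]) auto
  moreover have Z_bdd: "bdd_below Z" unfolding Z_def by (auto intro: bdd_belowI[of _ a])
  ultimately have "Inf Z \<in> Z" by (metis closed_contains_Inf)
  define s where "s = Inf Z"
  have first_zero: "s \<le> u" if "u \<in> Z" for u
    unfolding s_def using Z_bdd that by (simp add: cInf_lower)
  have "h s = 0" "s \<le> t" "s > a"
    using \<open>Inf Z \<in> Z\<close> neg unfolding Z_def s_def by (auto simp: order.order_iff_strict)
  have "at s within {a..} = at s"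
    by (rule at_within_interior) (use \<open>s > a\<close> in auto)
  then have "DERIV h s :> h' s" using deriv[of s] \<open>s > a\<close> by simp
  then obtain d where "d > 0" and left_pos: "\<And>e. e > 0 \<Longrightarrow> e < d \<Longrightarrow> h s < h (s - e)"
    using DERIV_neg_dec_left deriv_neg \<open>h s = 0\<close> \<open>s > a\<close> by (metis less_imp_le)
  define u where "u = s - min (d/2) ((s - a)/2)"
  have "a < u" "u < s" using \<open>d > 0\<close> \<open>s > a\<close> unfolding u_def by (auto simp: min_def field_simps)
  have "h u > 0" using left_pos[of "min (d/2) ((s - a)/2)"] \<open>d > 0\<close> \<open>s > a\<close> \<open>h s = 0\<close>
    unfolding u_def by (auto simp: min_def field_simps)
  have "\<exists>x\<ge>a. x \<le> u \<and> h x = 0"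
    by (rule IVT') (use neg \<open>h u > 0\<close> \<open>a < u\<close> \<open>u < s\<close> \<open>s \<le> t\<close>
        in \<open>auto intro!: continuous_on_subset[OF cont]\<close>)
  then obtain x where "x \<in> Z" "x \<le> u" using \<open>u < s\<close> \<open>s \<le> t\<close> unfolding Z_def by auto
  with first_zero \<open>u < s\<close> show False by fastforce
qed

lemma logistic_stays_above:
  fixes k \<eta> \<theta> t1 :: real and E y :: "real \<Rightarrow> real"
  assumes "y t1 > \<eta>"
    and "\<And>t. t \<ge> t1 \<Longrightarrow>
           (y has_real_derivative (k * y t * (\<theta> - y t) + E t)) (at t within {t1..})"
    and "\<And>t. t \<ge> t1 \<Longrightarrow> E t > - (k * \<eta> * (\<theta> - \<eta>))"
    and "t \<ge> t1"
  shows "y t > \<eta>"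
proof -
  have "\<eta> - y t < 0"
  proof (rule neg_on_halfline_if_deriv_neg_at_zeros
      [where h = "\<lambda>t. \<eta> - y t" and h' = "\<lambda>t. - (k * y t * (\<theta> - y t) + E t)" and a = t1])
    fix t assume "t \<ge> t1"
    show "((\<lambda>t. \<eta> - y t) has_real_derivative - (k * y t * (\<theta> - y t) + E t)) (at t within {t1..})"
      using assms(2)[OF \<open>t \<ge> t1\<close>] by (auto intro!: derivative_eq_intros)
    show "\<eta> - y t = 0 \<Longrightarrow> - (k * y t * (\<theta> - y t) + E t) < 0"
      using assms(3)[OF \<open>t \<ge> t1\<close>] by simp
  qed (use assms in auto)
  then show ?thesis by simp
qed

lemma damped_below_exp_decay:
  fixes z q F :: "real \<Rightarrow> real" and A C c \<delta> r t1 :: real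
  assumes "0 \<le> t1" "0 \<le> C" "\<delta> \<le> c" "\<delta> < r" "C < (r - \<delta>) * A"
    and "z t1 < A * exp (- \<delta> * t1)"
    and deriv: "\<And>t. t \<ge> t1 \<Longrightarrow> (z has_real_derivative (- q t * z t + F t)) (at t within {t1..})"
    and damping: "\<And>t. t \<ge> t1 \<Longrightarrow> q t \<ge> r"
    and forcing: "\<And>t. t \<ge> t1 \<Longrightarrow> F t \<le> C * exp (- c * t)"
    and "t \<ge> t1"
  shows "z t < A * exp (- \<delta> * t)"
proof -
  define g where "g t = A * exp (- \<delta> * t)" for t
  have "(r - \<delta>) * A > 0" using assms(2,5) by linarith
  then have "A > 0" using \<open>\<delta> < r\<close> by (simp add: zero_less_mult_iff)
  have "z t - g t < 0"
  proof (rule neg_on_halfline_if_deriv_neg_at_zeros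
      [where h = "\<lambda>t. z t - g t" and h' = "\<lambda>t. - q t * z t + F t + \<delta> * g t" and a = t1])
    fix t assume "t \<ge> t1"
    show "((\<lambda>t. z t - g t) has_real_derivative - q t * z t + F t + \<delta> * g t) (at t within {t1..})"
      unfolding g_def using deriv[OF \<open>t \<ge> t1\<close>] by (auto intro!: derivative_eq_intros)
    assume "z t - g t = 0"
    have "- q t * g t \<le> - r * g t"
      using damping[OF \<open>t \<ge> t1\<close>] \<open>A > 0\<close> unfolding g_def by simp
    moreover have "exp (- c * t) \<le> exp (- \<delta> * t)"
      using \<open>\<delta> \<le> c\<close> \<open>t \<ge> t1\<close> \<open>0 \<le> t1\<close> by (simp add: mult_right_mono)
    then have "F t \<le> C * exp (- \<delta> * t)"
      using forcing[OF \<open>t \<ge> t1\<close>] \<open>0 \<le> C\<close> by (meson mult_left_mono order_trans)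
    moreover have "C * exp (- \<delta> * t) < (r - \<delta>) * g t"
      unfolding g_def using assms(5) by simp
    ultimately show "- q t * z t + F t + \<delta> * g t < 0"
      using \<open>z t - g t = 0\<close> by (simp add: algebra_simps)
  qed (use assms(6,10) in \<open>auto simp: g_def\<close>)
  then show ?thesis unfolding g_def by simp
qed

lemma exp_decay_from_tail:
  fixes f :: "real \<Rightarrow> real" and A \<delta> t1 :: real
  assumes "continuous_on {0..t1} f" "0 \<le> \<delta>"
    and tail: "\<And>t. t \<ge> t1 \<Longrightarrow> \<bar>f t\<bar> \<le> A * exp (- \<delta> * t)"
  shows "\<exists>C'>0. \<forall>t\<ge>0. \<bar>f t\<bar> \<le> C' * exp (- \<delta> * t)"
proof -
  have "bounded (f ` {0..t1})"
    by (intro compact_imp_bounded compact_continuous_image assms(1)) auto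
  then obtain B where B: "\<And>t. t \<in> {0..t1} \<Longrightarrow> \<bar>f t\<bar> \<le> B"
    unfolding bounded_iff by (metis image_eqI real_norm_def)
  define C' where "C' = \<bar>A\<bar> + \<bar>B\<bar> * exp (\<delta> * t1) + 1"
  have "\<bar>f t\<bar> \<le> C' * exp (- \<delta> * t)" if "t \<ge> 0" for t
  proof -
    have "\<bar>f t\<bar> \<le> \<bar>A\<bar> * exp (- \<delta> * t) + \<bar>B\<bar> * exp (\<delta> * t1) * exp (- \<delta> * t)"
    proof (cases "t \<ge> t1")
      case True
      have "\<bar>f t\<bar> \<le> \<bar>A\<bar> * exp (- \<delta> * t)"
        using tail[OF True] by (meson abs_ge_self exp_ge_zero mult_right_mono order_trans)
      then show ?thesis by (simp add: add_increasing2)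
    next
      case False
      have "1 \<le> exp (\<delta> * (t1 - t))" using False \<open>0 \<le> \<delta>\<close> by simp
      also have "\<dots> = exp (\<delta> * t1) * exp (- \<delta> * t)" by (simp add: algebra_simps flip: exp_add)
      finally have "\<bar>B\<bar> \<le> \<bar>B\<bar> * exp (\<delta> * t1) * exp (- \<delta> * t)"
        by (simp add: mult.assoc mult_le_cancel_left1)
      then have "\<bar>f t\<bar> \<le> \<bar>B\<bar> * exp (\<delta> * t1) * exp (- \<delta> * t)"
        using B[of t] False \<open>t \<ge> 0\<close> by simp
      then show ?thesis by (simp add: add_increasing)
    qed
    also have "\<dots> \<le> C' * exp (- \<delta> * t)"
      unfolding C'_def by (simp add: distrib_right)
    finally show ?thesis .
  qed
  moreover have "C' > 0" unfolding C'_def by (simp add: add_nonneg_pos)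
  ultimately show ?thesis by blast
qed

lemma logistic_exp_convergence_from:
  fixes k \<eta> \<theta> C c t1 :: real and E y :: "real \<Rightarrow> real"
  assumes "k > 0" "\<eta> > 0" "c > 0" "C \<ge> 0" "t1 \<ge> 0" "y t1 > \<eta>"
    and y_deriv: "\<And>t. t \<ge> t1 \<Longrightarrow>
           (y has_real_derivative (k * y t * (\<theta> - y t) + E t)) (at t within {t1..})"
    and E_bound: "\<And>t. t \<ge> t1 \<Longrightarrow> \<bar>E t\<bar> \<le> C * exp (- c * t)"
    and E_small: "\<And>t. t \<ge> t1 \<Longrightarrow> \<bar>E t\<bar> < k * \<eta> * (\<theta> - \<eta>)"
  shows "\<exists>A \<delta>. \<delta> > 0 \<and> (\<forall>t\<ge>t1. \<bar>y t - \<theta>\<bar> \<le> A * exp (- \<delta> * t))"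
proof -
  have y_above: "y t > \<eta>" if "t \<ge> t1" for t
  proof (rule logistic_stays_above[OF \<open>y t1 > \<eta>\<close> y_deriv _ that])
    show "E t > - (k * \<eta> * (\<theta> - \<eta>))" if "t \<ge> t1" for t
      using E_small[OF that] by simp
  qed
  define \<delta> where "\<delta> = min c (k * \<eta> / 2)"
  define A where "A = C / (k * \<eta> - \<delta>) + \<bar>y t1 - \<theta>\<bar> * exp (\<delta> * t1) + 1"
  have "0 < \<delta>" "\<delta> \<le> c" "\<delta> < k * \<eta>"
    unfolding \<delta>_def using \<open>c > 0\<close> mult_pos_pos[OF \<open>k > 0\<close> \<open>\<eta> > 0\<close>] by auto
  have "C < (k * \<eta> - \<delta>) * A"
  proof -
    have "(k * \<eta> - \<delta>) * A = C + (k * \<eta> - \<delta>) * (\<bar>y t1 - \<theta>\<bar> * exp (\<delta> * t1) + 1)"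
      unfolding A_def using \<open>\<delta> < k * \<eta>\<close> by (simp add: field_simps)
    moreover have "(k * \<eta> - \<delta>) * (\<bar>y t1 - \<theta>\<bar> * exp (\<delta> * t1) + 1) > 0"
      using \<open>\<delta> < k * \<eta>\<close> by (intro mult_pos_pos add_nonneg_pos) auto
    ultimately show ?thesis by simp
  qed
  have "\<bar>y t1 - \<theta>\<bar> < A * exp (- \<delta> * t1)"
    using \<open>C \<ge> 0\<close> \<open>\<delta> < k * \<eta>\<close> unfolding A_def
    by (simp add: distrib_right exp_minus field_simps add_nonneg_pos)
  have "\<bar>y t - \<theta>\<bar> \<le> A * exp (- \<delta> * t)" if "t \<ge> t1" for t
  proof -
    have "s * (y t - \<theta>) < A * exp (- \<delta> * t)" if "s \<in> {1, -1}" for s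
    proof (rule damped_below_exp_decay[where q = "\<lambda>t. k * y t" and F = "\<lambda>t. s * E t"])
      fix t assume "t \<ge> t1"
      show "((\<lambda>t. s * (y t - \<theta>)) has_real_derivative
          - (k * y t) * (s * (y t - \<theta>)) + s * E t) (at t within {t1..})"
        using y_deriv[OF \<open>t \<ge> t1\<close>] by (auto intro!: derivative_eq_intros simp: algebra_simps)
      show "k * \<eta> \<le> k * y t" using y_above[OF \<open>t \<ge> t1\<close>] \<open>k > 0\<close> by simp
      show "s * E t \<le> C * exp (- c * t)" using E_bound[OF \<open>t \<ge> t1\<close>] \<open>s \<in> {1, -1}\<close> by auto
    qed (use assms(4,5) \<open>\<delta> \<le> c\<close> \<open>\<delta> < k * \<eta>\<close> \<open>C < (k * \<eta> - \<delta>) * A\<close>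
          \<open>\<bar>y t1 - \<theta>\<bar> < A * exp (- \<delta> * t1)\<close> \<open>t \<ge> t1\<close> \<open>s \<in> {1, -1}\<close> in auto)
    from this[of 1] this[of "-1"] show ?thesis by simp
  qed
  with \<open>0 < \<delta>\<close> show ?thesis by blast
qed

theorem lemma3p2:
  fixes p \<sigma> \<theta> C c :: real and E y :: "real \<Rightarrow> real"
  assumes "p > 0" and "\<sigma> > 0" and "\<theta> > 0"
    and "continuous_on {0..} E"
    and "C > 0" and "c > 0"
    and "\<And>t. t \<ge> 0 \<Longrightarrow> \<bar>E t\<bar> \<le> C * exp (- c * t)"
    and "\<And>t. t \<ge> 0 \<Longrightarrow> y t \<ge> 0"
    and "\<And>t. t \<ge> 0 \<Longrightarrow>
           (y has_real_derivative (p * \<sigma> * y t * (\<theta> - y t) + E t)) (at t within {0..})"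
  shows "(y \<longlongrightarrow> 0) at_top \<or>
         (\<exists>C' \<delta>. C' > 0 \<and> \<delta> > 0 \<and> (\<forall>t\<ge>0. \<bar>y t - \<theta>\<bar> \<le> C' * exp (- \<delta> * t)))"
proof (cases "(y \<longlongrightarrow> 0) at_top")
  case True
  then show ?thesis by simp
next
  case False
  then obtain e where "e > 0" and not_small: "\<not> eventually (\<lambda>t. dist (y t) 0 < e) at_top"
    unfolding tendsto_iff by blast
  define k where "k = p * \<sigma>"
  define \<eta> where "\<eta> = min e (\<theta> / 2) / 2"
  have "k > 0" "0 < \<eta>" "\<eta> < \<theta>" "\<eta> < e"
    unfolding k_def \<eta>_def using assms(1-3) \<open>e > 0\<close> by auto
  have "((\<lambda>t. C * exp (- c * t)) \<longlongrightarrow> 0) at_top" using \<open>c > 0\<close> by real_asymp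
  then have "eventually (\<lambda>t. C * exp (- c * t) < k * \<eta> * (\<theta> - \<eta>)) at_top"
    by (rule order_tendstoD) (use \<open>k > 0\<close> \<open>0 < \<eta>\<close> \<open>\<eta> < \<theta>\<close> in simp)
  then obtain N where N: "\<And>t. t \<ge> N \<Longrightarrow> C * exp (- c * t) < k * \<eta> * (\<theta> - \<eta>)"
    unfolding eventually_at_top_linorder by blast
  from not_small obtain t1 where "t1 \<ge> max N 0" "\<not> dist (y t1) 0 < e"
    unfolding eventually_at_top_linorder by blast
  then have "t1 \<ge> 0" "y t1 \<ge> e" using assms(8)[of t1] by auto
  have E_bound: "\<bar>E t\<bar> \<le> C * exp (- c * t)" if "t \<ge> t1" for t
    using assms(7) that \<open>t1 \<ge> 0\<close> by simp
  have E_small: "\<bar>E t\<bar> < k * \<eta> * (\<theta> - \<eta>)" if "t \<ge> t1" for t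
    using E_bound[OF that] N[of t] that \<open>t1 \<ge> max N 0\<close> by simp
  have y_deriv: "(y has_real_derivative (k * y t * (\<theta> - y t) + E t)) (at t within {t1..})"
    if "t \<ge> t1" for t
    using assms(9)[of t] that \<open>t1 \<ge> 0\<close> unfolding k_def
    by (auto intro: has_field_derivative_subset)
  have "y t1 > \<eta>" using \<open>y t1 \<ge> e\<close> \<open>\<eta> < e\<close> by simp
  then obtain A \<delta> where "\<delta> > 0" and tail: "\<And>t. t \<ge> t1 \<Longrightarrow> \<bar>y t - \<theta>\<bar> \<le> A * exp (- \<delta> * t)"
    using logistic_exp_convergence_from[OF \<open>k > 0\<close> \<open>0 < \<eta>\<close> \<open>c > 0\<close> less_imp_le[OF \<open>C > 0\<close>]
        \<open>t1 \<ge> 0\<close> _ y_deriv E_bound E_small] by blast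
  have "continuous_on {0..t1} y"
    by (rule DERIV_continuous_on, rule has_field_derivative_subset[OF assms(9)]) auto
  then have "continuous_on {0..t1} (\<lambda>t. y t - \<theta>)" by (intro continuous_intros)
  then obtain C' where "C' > 0" "\<forall>t\<ge>0. \<bar>y t - \<theta>\<bar> \<le> C' * exp (- \<delta> * t)"
    using exp_decay_from_tail[OF _ less_imp_le[OF \<open>0 < \<delta>\<close>] tail] by blast
  with \<open>0 < \<delta>\<close> show ?thesis by blast
qed

end
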